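(* Let $K$ be a connected 4-regular simple graph with an odd number of vertices, let $v,w$ be adjacent vertices of $K$ having exactly one common neighbour $c$, let the neighbours of $w$ be $v,a,b,c$ and the neighbours of $v$ be $w,c,d,e$, and let $S=K-\{v,w\}$. Let $\sigma$ be a bipartition of the edges of $S$ such that each part is the edge set of a spanning forest of $S$ (possibly with a single tree) in which every tree contains at least one of $a,b,d,e$. Then of the two edges of $S$ incident to $c$ exactly one lies in each part of $\sigma$, and swapping which parts these two edges are in yields a new bipartition $\sigma'$ of $E(S)$ which again has the property that each part is the edge set of a spanning forest of $S$ in which every tree contains at least one of $a,b,d,e$ (though the vertices need not be distributed among the trees in the same way).
   Context: $K-\{v,w\}$ denotes $K$ with $v$, $w$ and their incident edges removed; in $S$ the vertex $c$ has degree 2. *)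

theory Defs
  imports Main
begin

definition simple_graph :: "'a set \<Rightarrow> 'a set set \<Rightarrow> bool" where
  "simple_graph V E \<longleftrightarrow> finite V \<and>
     (\<forall>e\<in>E. \<exists>x y. x \<in> V \<and> y \<in> V \<and> x \<noteq> y \<and> e = {x, y})"

definition nbrs :: "'a set set \<Rightarrow> 'a \<Rightarrow> 'a set" where
  "nbrs E x = {y. {x, y} \<in> E}"

definition regular :: "nat \<Rightarrow> 'a set \<Rightarrow> 'a set set \<Rightarrow> bool" where
  "regular k V E \<longleftrightarrow> (\<forall>x\<in>V. card {e\<in>E. x \<in> e} = k)"

definition reachable :: "'a set set \<Rightarrow> 'a \<Rightarrow> 'a \<Rightarrow> bool" where
  "reachable E = (\<lambda>x y. {x, y} \<in> E)\<^sup>*\<^sup>*"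

definition connected_graph :: "'a set \<Rightarrow> 'a set set \<Rightarrow> bool" where
  "connected_graph V E \<longleftrightarrow> (\<forall>x\<in>V. \<forall>y\<in>V. reachable E x y)"

definition del_verts_V :: "'a set \<Rightarrow> 'a set \<Rightarrow> 'a set" where
  "del_verts_V V X = V - X"

definition del_verts_E :: "'a set set \<Rightarrow> 'a set \<Rightarrow> 'a set set" where
  "del_verts_E E X = {e\<in>E. e \<inter> X = {}}"

definition has_cycle :: "'a set set \<Rightarrow> bool" where
  "has_cycle F \<longleftrightarrow> (\<exists>xs. length xs \<ge> 3 \<and> distinct xs \<and>
      (\<forall>i. Suc i < length xs \<longrightarrow> {xs ! i, xs ! Suc i} \<in> F) \<and>
      {last xs, hd xs} \<in> F)"

text \<open>F is the edge set of a spanning forest of (V,E): F is an acyclic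
  subset of E (spanning: all of V is the vertex set).\<close>
definition spanning_forest :: "'a set \<Rightarrow> 'a set set \<Rightarrow> 'a set set \<Rightarrow> bool" where
  "spanning_forest V E F \<longleftrightarrow> F \<subseteq> E \<and> \<not> has_cycle F"

definition rooted_forest :: "'a set \<Rightarrow> 'a set set \<Rightarrow> 'a set \<Rightarrow> 'a set set \<Rightarrow> bool" where
  "rooted_forest V E T F \<longleftrightarrow> spanning_forest V E F \<and>
     (\<forall>x\<in>V. \<exists>t\<in>T. reachable F x t)"

end

theory Submission
  imports Defs
begin

text \<open>In S the vertex c has degree 2, having lost its neighbours v and w, and it is not a
  root. Every tree of a rooted forest joins c to a root, so each of the two disjoint forests
  contains an edge at c, hence exactly one: c is a leaf of both. Moving a leaf edge to the other
  edge at c keeps c a leaf; a cycle never passes through a leaf and a path between two other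
  vertices never uses one, so the result is still acyclic and every vertex still reaches
  a root.\<close>

lemma reachable_mono:
  assumes "F \<subseteq> G" and "reachable F x y"
  shows "reachable G x y"
  using assms(2) unfolding reachable_def
proof (induction rule: rtranclp_induct)
  case (step y z)
  then show ?case using assms(1) by (meson rtranclp.rtrancl_into_rtrancl subsetD)
qed simp

lemma reachable_edge_step:
  "{x, y} \<in> F \<Longrightarrow> reachable F y z \<Longrightarrow> reachable F x z"
  unfolding reachable_def by (rule converse_rtranclp_into_rtranclp)

lemma reachable_without_leaf_edge:
  assumes leaf: "\<forall>f\<in>F. c \<in> f \<longrightarrow> f = {c, x}"
    and "reachable F u t" and "t \<noteq> c"
  shows "reachable (F - {{c, x}}) (if u = c then x else u) t"
  using \<open>reachable F u t\<close>[unfolded reachable_def]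
proof (induction rule: converse_rtranclp_induct)
  case base
  then show ?case using \<open>t \<noteq> c\<close> by (simp add: reachable_def)
next
  case (step u u')
  consider "u = c" | "u' = c" | "u \<noteq> c" "u' \<noteq> c" by blast
  then show ?case
  proof cases
    case 1
    then have "u' = c \<or> u' = x"
      using leaf step.hyps(1) by (auto simp: doubleton_eq_iff)
    then show ?thesis using 1 step.IH by auto
  next
    case 2
    then have "u = c \<or> u = x"
      using leaf step.hyps(1) by (auto simp: doubleton_eq_iff)
    then show ?thesis using 2 step.IH by auto
  next
    case 3
    then have "{u, u'} \<in> F - {{c, x}}"
      using step.hyps(1) by (auto simp: doubleton_eq_iff)
    then show ?thesis using 3 step.IH by (simp add: reachable_edge_step)
  qed
qed

lemma has_cycle_mono: "F \<subseteq> G \<Longrightarrow> has_cycle F \<Longrightarrow> has_cycle G"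
  unfolding has_cycle_def by blast

definition is_cycle :: "'a set set \<Rightarrow> 'a list \<Rightarrow> bool" where
  "is_cycle F xs \<longleftrightarrow> length xs \<ge> 3 \<and> distinct xs \<and>
      (\<forall>i. Suc i < length xs \<longrightarrow> {xs ! i, xs ! Suc i} \<in> F) \<and> {last xs, hd xs} \<in> F"

lemma has_cycle_iff_is_cycle: "has_cycle F \<longleftrightarrow> (\<exists>xs. is_cycle F xs)"
  unfolding has_cycle_def is_cycle_def by blast

lemma is_cycle_two_neighbours:
  assumes cyc: "is_cycle F xs" and "z \<in> set xs"
  shows "\<exists>p q. p \<noteq> q \<and> {z, p} \<in> F \<and> {z, q} \<in> F"
proof -
  define n where "n = length xs"
  have n: "n \<ge> 3" and dist: "distinct xs"
    and path: "\<And>i. Suc i < n \<Longrightarrow> {xs ! i, xs ! Suc i} \<in> F"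
    and close: "{last xs, hd xs} \<in> F"
    using cyc unfolding is_cycle_def n_def by auto
  have "xs \<noteq> []" using n unfolding n_def by auto
  then have close: "{xs ! (n - 1), xs ! 0} \<in> F"
    using close unfolding n_def by (simp add: last_conv_nth hd_conv_nth)
  have neq: "xs ! i \<noteq> xs ! j" if "i < n" "j < n" "i \<noteq> j" for i j
    using nth_eq_iff_index_eq[OF dist] that unfolding n_def by blast
  obtain i where i: "i < n" "xs ! i = z"
    using \<open>z \<in> set xs\<close> unfolding n_def by (auto simp: in_set_conv_nth)
  consider "i = 0" | "i = n - 1" | "0 < i" "i < n - 1" using i by linarith
  then show ?thesis
  proof cases
    case 1
    then show ?thesis using path[of 0] close n i neq[of 1 "n - 1"]
      by (intro exI[of _ "xs ! 1"] exI[of _ "xs ! (n - 1)"]) (auto simp: insert_commute)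
  next
    case 2
    then show ?thesis using path[of "n - 2"] close n i neq[of "n - 2" 0]
      by (intro exI[of _ "xs ! (n - 2)"] exI[of _ "xs ! 0"])
        (auto simp: insert_commute Suc_diff_Suc numeral_2_eq_2)
  next
    case 3
    then show ?thesis using path[of "i - 1"] path[of i] i neq[of "i - 1" "Suc i"]
      by (intro exI[of _ "xs ! (i - 1)"] exI[of _ "xs ! Suc i"]) (auto simp: insert_commute)
  qed
qed

lemma has_cycle_avoiding_leaf:
  assumes "has_cycle F" and leaf: "\<And>z. {c, z} \<in> F \<Longrightarrow> z = y"
  shows "has_cycle {f \<in> F. c \<notin> f}"
proof -
  obtain xs where cyc: "is_cycle F xs" using assms(1) has_cycle_iff_is_cycle by blast
  have "c \<notin> set xs"
    using is_cycle_two_neighbours[OF cyc] leaf by blast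
  moreover have "xs \<noteq> []" using cyc unfolding is_cycle_def by auto
  ultimately have "is_cycle {f \<in> F. c \<notin> f} xs"
    using cyc unfolding is_cycle_def
    by (metis (mono_tags, lifting) Suc_lessD empty_iff hd_in_set insertE last_in_set
        mem_Collect_eq nth_mem)
  then show ?thesis using has_cycle_iff_is_cycle by blast
qed

lemma simple_graph_incident_edge:
  assumes "simple_graph V E" and "f \<in> E" and "c \<in> f"
  shows "\<exists>z\<in>V. z \<noteq> c \<and> f = {c, z}"
  using assms unfolding simple_graph_def by fastforce

lemma simple_graph_incident_edges:
  "simple_graph V E \<Longrightarrow> {f \<in> E. z \<in> f} = (\<lambda>y. {z, y}) ` nbrs E z"
  using simple_graph_incident_edge unfolding nbrs_def by fastforce

lemma simple_graph_nbrs_subset: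
  assumes "simple_graph V E"
  shows "nbrs E z \<subseteq> V - {z}"
  using assms unfolding simple_graph_def nbrs_def by (fastforce simp: doubleton_eq_iff)

lemma simple_graph_card_incident_edges:
  assumes "simple_graph V E"
  shows "card {f \<in> E. z \<in> f} = card (nbrs E z)"
proof -
  have "inj_on (\<lambda>y. {z, y}) (nbrs E z)"
    using simple_graph_nbrs_subset[OF assms] by (auto intro!: inj_onI simp: doubleton_eq_iff)
  then show ?thesis by (simp add: simple_graph_incident_edges[OF assms] card_image)
qed

lemma incident_edges_del_verts:
  assumes "simple_graph V E" and "c \<notin> X"
  shows "{f \<in> del_verts_E E X. c \<in> f} = {f \<in> E. c \<in> f} - (\<lambda>x. {c, x}) ` X"
  using simple_graph_incident_edge[OF assms(1)] assms(2)
  unfolding del_verts_E_def by (fastforce simp: doubleton_eq_iff)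

lemma simple_graph_del_verts:
  "simple_graph V E \<Longrightarrow> simple_graph (del_verts_V V X) (del_verts_E E X)"
  unfolding simple_graph_def del_verts_V_def del_verts_E_def by fastforce

lemma card_incident_edges_del_verts:
  assumes "simple_graph V E" and "c \<notin> X" and "X \<subseteq> nbrs E c"
  shows "card {f \<in> del_verts_E E X. c \<in> f} = card (nbrs E c) - card X"
proof -
  let ?cX = "(\<lambda>x. {c, x}) ` X"
  have "finite V" using assms(1) unfolding simple_graph_def by blast
  then have "finite X"
    using simple_graph_nbrs_subset[OF assms(1)] assms(3) by (meson finite_subset subset_trans Diff_subset)
  moreover have "?cX \<subseteq> {f \<in> E. c \<in> f}"
    using assms(3) unfolding nbrs_def by blast
  moreover have "inj_on (\<lambda>x. {c, x}) X"
    using assms(2) by (intro inj_onI) (metis doubleton_eq_iff)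
  ultimately have "card ({f \<in> E. c \<in> f} - ?cX) = card {f \<in> E. c \<in> f} - card X"
    by (simp add: card_Diff_subset card_image)
  then show ?thesis
    using incident_edges_del_verts[OF assms(1,2)] simple_graph_card_incident_edges[OF assms(1)]
    by simp
qed

lemma regular_card_nbrs:
  "simple_graph V E \<Longrightarrow> regular k V E \<Longrightarrow> x \<in> V \<Longrightarrow> card (nbrs E x) = k"
  using simple_graph_card_incident_edges unfolding regular_def by metis

lemma rooted_forest_edge_at:
  assumes "rooted_forest V E T F" and "c \<in> V" and "c \<notin> T"
  shows "\<exists>f\<in>F. c \<in> f"
proof -
  obtain t where "t \<in> T" and "reachable F c t"
    using assms(1,2) unfolding rooted_forest_def by blast
  then have "(\<lambda>x y. {x, y} \<in> F)\<^sup>*\<^sup>* c t" and "c \<noteq> t"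
    using assms(3) unfolding reachable_def by auto
  then obtain z where "{c, z} \<in> F" by (blast elim: converse_rtranclpE)
  then show ?thesis by blast
qed

lemma rooted_forest_move_leaf_edge:
  assumes rf: "rooted_forest V E T F" and "c \<notin> T"
    and at_c: "{f \<in> E. c \<in> f} = {{c, x}, {c, y}}"
    and "{c, x} \<in> F" and "{c, y} \<notin> F"
    and "y \<in> V" and "y \<noteq> c"
  shows "rooted_forest V E T (insert {c, y} (F - {{c, x}}))"
proof -
  define F' where "F' = insert {c, y} (F - {{c, x}})"
  have "F \<subseteq> E" and acyclic: "\<not> has_cycle F" and roots: "\<forall>u\<in>V. \<exists>t\<in>T. reachable F u t"
    using rf unfolding rooted_forest_def spanning_forest_def by auto
  have leaf: "\<forall>f\<in>F. c \<in> f \<longrightarrow> f = {c, x}"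
    using at_c \<open>F \<subseteq> E\<close> \<open>{c, y} \<notin> F\<close> by blast
  have leaf': "z = y" if "{c, z} \<in> F'" for z
    using that leaf unfolding F'_def by (auto simp: doubleton_eq_iff)
  have "{f \<in> F'. c \<notin> f} \<subseteq> F" unfolding F'_def by auto
  then have "\<not> has_cycle F'"
    using has_cycle_avoiding_leaf[OF _ leaf'] has_cycle_mono acyclic by blast
  moreover have "F' \<subseteq> E" using \<open>F \<subseteq> E\<close> at_c unfolding F'_def by blast
  moreover have "\<exists>t\<in>T. reachable F' u t" if "u \<in> V" for u
  proof -
    have to_root: "\<exists>t\<in>T. reachable F' (if z = c then x else z) t" if "z \<in> V" for z
    proof -
      obtain t where "t \<in> T" "reachable F z t" using roots \<open>z \<in> V\<close> by blast
      then show ?thesis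
        using reachable_without_leaf_edge[OF leaf] reachable_mono[of _ F'] \<open>c \<notin> T\<close>
        unfolding F'_def by (metis Diff_subset_conv subset_insertI)
    qed
    show ?thesis
    proof (cases "u = c")
      case True
      have "{c, y} \<in> F'" unfolding F'_def by simp
      then show ?thesis
        using to_root[OF \<open>y \<in> V\<close>] \<open>y \<noteq> c\<close> True reachable_edge_step by fastforce
    qed (use to_root[OF \<open>u \<in> V\<close>] in auto)
  qed
  ultimately show ?thesis
    unfolding F'_def[symmetric] rooted_forest_def spanning_forest_def by blast
qed

lemma rooted_forest_exchange_edges_at:
  assumes "simple_graph V E" and "rooted_forest V E T F" and "c \<notin> T"
    and at_c: "{f \<in> E. c \<in> f} = {f1, f2}" and "f1 \<in> F" and "f2 \<notin> F"
  shows "rooted_forest V E T (F - {f1} \<union> {f2})"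
proof -
  have "f1 \<in> E" "c \<in> f1" "f2 \<in> E" "c \<in> f2" using at_c by blast+
  then obtain x y where "f1 = {c, x}" "f2 = {c, y}" "y \<in> V" "y \<noteq> c"
    using simple_graph_incident_edge[OF assms(1)] by metis
  then show ?thesis
    using rooted_forest_move_leaf_edge[OF assms(2,3), of x y] assms(4-6) by simp
qed

lemma rooted_forests_exchange_edges_at:
  assumes "simple_graph V E" and "rooted_forest V E T F1" and "rooted_forest V E T F2"
    and "F1 \<inter> F2 = {}" and "c \<notin> T" and at_c: "{f \<in> E. c \<in> f} = {f1, f2}"
    and "f1 \<in> F1" and "f2 \<in> F2"
  shows "rooted_forest V E T (F1 - {f1} \<union> {f2}) \<and> rooted_forest V E T (F2 - {f2} \<union> {f1})"
proof -
  have "f2 \<notin> F1" "f1 \<notin> F2" using assms(4,7,8) by blast+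
  moreover have "{f \<in> E. c \<in> f} = {f2, f1}" using at_c by (simp add: insert_commute)
  ultimately show ?thesis
    using rooted_forest_exchange_edges_at[OF assms(1,2,5) at_c]
      rooted_forest_exchange_edges_at[OF assms(1,3,5)] assms(7,8) by simp
qed

lemma rooted_forests_share_edges_at:
  assumes "rooted_forest V E T F1" and "rooted_forest V E T F2" and "F1 \<inter> F2 = {}"
    and "c \<in> V" and "c \<notin> T" and at_c: "{f \<in> E. c \<in> f} = {e1, e2}"
  shows "(e1 \<in> F1 \<and> e2 \<in> F2) \<or> (e1 \<in> F2 \<and> e2 \<in> F1)"
proof -
  obtain g1 g2 where "g1 \<in> F1" "c \<in> g1" "g2 \<in> F2" "c \<in> g2"
    using rooted_forest_edge_at[OF assms(1,4,5)] rooted_forest_edge_at[OF assms(2,4,5)] by blast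
  moreover have "F1 \<subseteq> E" "F2 \<subseteq> E"
    using assms(1,2) unfolding rooted_forest_def spanning_forest_def by auto
  ultimately have "g1 \<in> {e1, e2}" "g2 \<in> {e1, e2}" "g1 \<noteq> g2"
    using at_c assms(3) by blast+
  then show ?thesis using \<open>g1 \<in> F1\<close> \<open>g2 \<in> F2\<close> by auto
qed

theorem lemma4p1:
  fixes V :: "'a set" and E :: "'a set set" and v w a b c d e :: 'a
    and F1 F2 :: "'a set set"
  assumes "simple_graph V E" and "connected_graph V E" and "regular 4 V E"
    and "odd (card V)"
    and "v \<in> V" and "w \<in> V" and "{v, w} \<in> E"
    and "nbrs E v \<inter> nbrs E w = {c}"
    and "nbrs E w = {v, a, b, c}" and "nbrs E v = {w, c, d, e}"
    and "F1 \<union> F2 = del_verts_E E {v, w}" and "F1 \<inter> F2 = {}"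
    and "rooted_forest (del_verts_V V {v, w}) (del_verts_E E {v, w}) {a, b, d, e} F1"
    and "rooted_forest (del_verts_V V {v, w}) (del_verts_E E {v, w}) {a, b, d, e} F2"
  shows "\<exists>e1 e2. e1 \<noteq> e2 \<and> {x \<in> del_verts_E E {v, w}. c \<in> x} = {e1, e2}
           \<and> ((e1 \<in> F1 \<and> e2 \<in> F2) \<or> (e1 \<in> F2 \<and> e2 \<in> F1))
           \<and> (\<forall>f1 f2. f1 \<in> F1 \<and> f2 \<in> F2 \<and> {f1, f2} = {e1, e2} \<longrightarrow>
                rooted_forest (del_verts_V V {v, w}) (del_verts_E E {v, w}) {a, b, d, e}
                   (F1 - {f1} \<union> {f2})
              \<and> rooted_forest (del_verts_V V {v, w}) (del_verts_E E {v, w}) {a, b, d, e}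
                   (F2 - {f2} \<union> {f1}))"
proof -
  define V' E' T where "V' = del_verts_V V {v, w}" and "E' = del_verts_E E {v, w}"
    and "T = {a, b, d, e}"
  have "c \<notin> {v, a, b}" and "c \<notin> {w, d, e}"
    using regular_card_nbrs[OF assms(1,3)] assms(5,6,9,10)
    by (force simp: card_insert_if split: if_splits)+
  then have "c \<notin> {v, w}" and "c \<notin> T" unfolding T_def by auto
  have "c \<in> V" and "v \<noteq> w"
    using simple_graph_nbrs_subset[OF assms(1), of w] assms(9) by auto
  then have "c \<in> V'" using \<open>c \<notin> {v, w}\<close> unfolding V'_def del_verts_V_def by blast
  have "{v, w} \<subseteq> nbrs E c"
    using assms(9,10) unfolding nbrs_def by (auto simp: insert_commute)
  then have "card {f \<in> E'. c \<in> f} = 2"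
    using card_incident_edges_del_verts[OF assms(1) \<open>c \<notin> {v, w}\<close>]
      regular_card_nbrs[OF assms(1,3) \<open>c \<in> V\<close>] \<open>v \<noteq> w\<close> unfolding E'_def by simp
  then obtain e1 e2 where at_c: "{f \<in> E'. c \<in> f} = {e1, e2}" and "e1 \<noteq> e2"
    by (auto simp: card_2_iff)
  have S: "simple_graph V' E'"
    using simple_graph_del_verts[OF assms(1)] unfolding V'_def E'_def .
  have rf: "rooted_forest V' E' T F1" "rooted_forest V' E' T F2"
    using assms(13,14) unfolding V'_def E'_def T_def .
  have swap: "\<forall>f1 f2. f1 \<in> F1 \<and> f2 \<in> F2 \<and> {f1, f2} = {e1, e2} \<longrightarrow>
      rooted_forest V' E' T (F1 - {f1} \<union> {f2}) \<and> rooted_forest V' E' T (F2 - {f2} \<union> {f1})"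
    using rooted_forests_exchange_edges_at[OF S rf assms(12) \<open>c \<notin> T\<close>] at_c by metis
  note parts = rooted_forests_share_edges_at[OF rf assms(12) \<open>c \<in> V'\<close> \<open>c \<notin> T\<close> at_c]
  show ?thesis
    unfolding V'_def[symmetric] E'_def[symmetric] T_def[symmetric]
    by (intro exI[of _ e1] exI[of _ e2] conjI; fact)
qed

end
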